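(* Let $n\ge2$, $s\in\mathbb{R}$ with $s\neq1$, and $k>0$. If $\phi\in C^1(\mathbb{R}^n)$ satisfies $\operatorname{supp}\phi\subset B(k)$, then $$\|(1+k-r)^{(s-2)/2}\phi\|_{L^2(\mathbb{R}^n)}\le C\Big(\|(1+k-r)^{s/2}\partial_r\phi\|_{L^2(\mathbb{R}^n)}+\big\|(1+k-r)^{s/2}\tfrac{\phi}{r}\big\|_{L^2(\mathbb{R}^n)}\Big),$$ whenever the right-hand side is finite, where $C$ depends only on $n$ and $s$ (in particular it is independent of $k$).
   Context: $r=|x|$, $\partial_r=\frac{x}{|x|}\cdot\nabla$ denotes the radial derivative, and $B(k)=\{x\in\mathbb{R}^n:|x|\le k\}$. All weights are evaluated only on $B(k)$, where $1+k-r\ge1$. *)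

theory Defs
  imports "HOL-Analysis.Analysis"
begin

definition wt :: "real \<Rightarrow> real \<Rightarrow> real^'n \<Rightarrow> real" where
  "wt k a x = (1 + k - norm x) powr a"

text \<open>Radial derivative (x/|x|) . grad phi, given the gradient field g of phi.\<close>
definition radial_deriv :: "(real^'n \<Rightarrow> real^'n) \<Rightarrow> real^'n \<Rightarrow> real" where
  "radial_deriv g x = (x /\<^sub>R norm x) \<bullet> g x"

text \<open>L^2(R^n) norm (meaningful for square-integrable f).\<close>
definition L2norm :: "(real^'n \<Rightarrow> real) \<Rightarrow> real" where
  "L2norm f = sqrt (\<integral>x. (f x)\<^sup>2 \<partial>lborel)"

end

theory Submission
  imports Defs
begin

text \<open>
  Write \<open>\<omega> = 1 + k - r\<close>, \<open>u = \<omega>\<^bsup>(s-2)/2\<^esup>\<phi>\<close>, \<open>v = \<omega>\<^bsup>s/2\<^esup>\<partial>\<^sub>r\<phi>\<close>, \<open>w = \<omega>\<^bsup>s/2\<^esup>\<phi>/r\<close> and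
  \<open>f = u w = \<omega>\<^bsup>s-1\<^esup>\<phi>\<^sup>2/r\<close>.  Along rays \<open>x\<cdot>\<nabla>f = -(s-1)u\<^sup>2 + 2uv - uw\<close>, and for integrable \<open>f\<close> and \<open>x\<cdot>\<nabla>f\<close>
  the divergence theorem for the field \<open>x f(x)\<close> gives \<open>\<integral> x\<cdot>\<nabla>f = -n \<integral> f\<close>.  Hence
  \<open>(s-1)\<parallel>u\<parallel>\<^sup>2 = 2\<langle>u,v\<rangle> + (n-1)\<langle>u,w\<rangle>\<close>, and Cauchy--Schwarz followed by division by \<open>\<parallel>u\<parallel>\<close> yields
  \<open>\<parallel>u\<parallel> \<le> (n+1)/|s-1| (\<parallel>v\<parallel> + \<parallel>w\<parallel>)\<close>.  The constant does not involve \<open>k\<close>.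
\<close>

lemma integrable_mult_of_square_integrable:
  fixes u v :: "'a \<Rightarrow> real"
  assumes "integrable M (\<lambda>x. (u x)\<^sup>2)" "integrable M (\<lambda>x. (v x)\<^sup>2)"
    and [measurable]: "u \<in> borel_measurable M" "v \<in> borel_measurable M"
  shows "integrable M (\<lambda>x. u x * v x)"
proof (rule Bochner_Integration.integrable_bound)
  show "integrable M (\<lambda>x. (u x)\<^sup>2 + (v x)\<^sup>2)"
    using assms by auto
  have "\<bar>u x * v x\<bar> \<le> (u x)\<^sup>2 + (v x)\<^sup>2" for x
  proof -
    have "2 * \<bar>u x * v x\<bar> \<le> (u x)\<^sup>2 + (v x)\<^sup>2"
      using sum_squares_bound[of "\<bar>u x\<bar>" "\<bar>v x\<bar>"] by (simp add: abs_mult mult.assoc)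
    then show ?thesis
      using abs_ge_zero[of "u x * v x"] by linarith
  qed
  then show "AE x in M. norm (u x * v x) \<le> norm ((u x)\<^sup>2 + (v x)\<^sup>2)"
    by simp
qed measurable

lemma Cauchy_Schwarz_integral:
  fixes u v :: "'a \<Rightarrow> real"
  assumes iu: "integrable M (\<lambda>x. (u x)\<^sup>2)" and iv: "integrable M (\<lambda>x. (v x)\<^sup>2)"
    and [measurable]: "u \<in> borel_measurable M" "v \<in> borel_measurable M"
  shows "\<bar>\<integral>x. u x * v x \<partial>M\<bar> \<le> sqrt (\<integral>x. (u x)\<^sup>2 \<partial>M) * sqrt (\<integral>x. (v x)\<^sup>2 \<partial>M)"
proof -
  have iuv: "integrable M (\<lambda>x. \<bar>u x\<bar> * \<bar>v x\<bar>)"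
    by (rule integrable_mult_of_square_integrable) (use iu iv in simp_all)
  have sq: "(\<integral>\<^sup>+x. ennreal \<bar>w x\<bar> ^ 2 \<partial>M) = ennreal (\<integral>x. (w x)\<^sup>2 \<partial>M)"
    if "integrable M (\<lambda>x. (w x)\<^sup>2)" for w :: "'a \<Rightarrow> real"
    using nn_integral_eq_integral[OF that] by (simp add: ennreal_power)
  have "ennreal ((\<integral>x. \<bar>u x\<bar> * \<bar>v x\<bar> \<partial>M)\<^sup>2) = (ennreal (\<integral>x. \<bar>u x\<bar> * \<bar>v x\<bar> \<partial>M))\<^sup>2"
    by (simp add: ennreal_power integral_nonneg)
  also have "\<dots> = (\<integral>\<^sup>+x. ennreal \<bar>u x\<bar> * ennreal \<bar>v x\<bar> \<partial>M)\<^sup>2"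
    using nn_integral_eq_integral[OF iuv] by (simp add: ennreal_mult)
  also have "\<dots> \<le> (\<integral>\<^sup>+x. ennreal \<bar>u x\<bar> ^ 2 \<partial>M) * (\<integral>\<^sup>+x. ennreal \<bar>v x\<bar> ^ 2 \<partial>M)"
    by (rule Cauchy_Schwarz_nn_integral) measurable
  also have "\<dots> = ennreal ((\<integral>x. (u x)\<^sup>2 \<partial>M) * (\<integral>x. (v x)\<^sup>2 \<partial>M))"
    by (simp add: sq iu iv ennreal_mult)
  finally have "ennreal ((\<integral>x. \<bar>u x\<bar> * \<bar>v x\<bar> \<partial>M)\<^sup>2)
      \<le> ennreal ((\<integral>x. (u x)\<^sup>2 \<partial>M) * (\<integral>x. (v x)\<^sup>2 \<partial>M))" .
  then have CS: "(\<integral>x. \<bar>u x\<bar> * \<bar>v x\<bar> \<partial>M)\<^sup>2 \<le> (\<integral>x. (u x)\<^sup>2 \<partial>M) * (\<integral>x. (v x)\<^sup>2 \<partial>M)"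
    using ennreal_le_iff[of "(\<integral>x. (u x)\<^sup>2 \<partial>M) * (\<integral>x. (v x)\<^sup>2 \<partial>M)"] by simp
  have "\<bar>\<integral>x. u x * v x \<partial>M\<bar> \<le> \<integral>x. \<bar>u x\<bar> * \<bar>v x\<bar> \<partial>M"
    unfolding abs_mult[symmetric] by (rule integral_abs_bound)
  also have "\<dots> \<le> sqrt ((\<integral>x. (u x)\<^sup>2 \<partial>M) * (\<integral>x. (v x)\<^sup>2 \<partial>M))"
    using CS by (rule real_le_rsqrt)
  also have "\<dots> = sqrt (\<integral>x. (u x)\<^sup>2 \<partial>M) * sqrt (\<integral>x. (v x)\<^sup>2 \<partial>M)"
    by (rule real_sqrt_mult)
  finally show ?thesis .
qed

lemma integral_lborel_scaleR:
  fixes h :: "'a::euclidean_space \<Rightarrow> real"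
  assumes c: "c > 0" and h: "integrable lborel h"
  shows "integrable lborel (\<lambda>x. h (c *\<^sub>R x))"
    and "(\<integral>x. h (c *\<^sub>R x) \<partial>lborel) = (\<integral>x. h x \<partial>lborel) / c ^ DIM('a)"
proof -
  let ?M = "distr lborel borel (\<lambda>x::'a. 0 + c *\<^sub>R x)"
  have [measurable]: "h \<in> borel_measurable borel"
    using h by auto
  have lborel_eq: "lborel = density ?M (\<lambda>_. \<bar>c\<bar> ^ DIM('a))"
    using lborel_affine[of c "0::'a"] c by simp
  have "integrable ?M (\<lambda>x. \<bar>c\<bar> ^ DIM('a) *\<^sub>R h x)"
    using h by (subst (asm) lborel_eq, subst (asm) integrable_density) auto
  then have "integrable lborel (\<lambda>x. \<bar>c\<bar> ^ DIM('a) *\<^sub>R h (c *\<^sub>R x))"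
    by (subst (asm) integrable_distr_eq) auto
  then show "integrable lborel (\<lambda>x. h (c *\<^sub>R x))"
    using c by simp
  have "(\<integral>x. h x \<partial>lborel) = (\<integral>x. \<bar>c\<bar> ^ DIM('a) *\<^sub>R h x \<partial>?M)"
    by (subst lborel_eq, subst integral_density) auto
  also have "\<dots> = c ^ DIM('a) * (\<integral>x. h (c *\<^sub>R x) \<partial>lborel)"
    using c by (subst integral_distr) auto
  finally show "(\<integral>x. h (c *\<^sub>R x) \<partial>lborel) = (\<integral>x. h x \<partial>lborel) / c ^ DIM('a)"
    using c by (simp add: field_simps)
qed

lemma integral_inverse_power_atLeastAtMost:
  fixes a :: real and n :: nat
  assumes "1 \<le> a" and "n \<ge> 1"
  shows "(\<integral>t. indicator {1..a} t / t ^ (n + 1) \<partial>lborel) = (1 - 1 / a ^ n) / n"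
proof -
  have "(\<integral>t. indicator {1..a} t *\<^sub>R (1 / t ^ (n + 1)) \<partial>lborel)
      = (\<lambda>t. - 1 / (real n * t ^ n)) a - (\<lambda>t. - 1 / (real n * t ^ n)) 1"
  proof (rule integral_FTC_atLeastAtMost)
    fix t :: real
    assume t: "1 \<le> t" "t \<le> a"
    have "t ^ n = t * t ^ (n - 1)"
      using \<open>n \<ge> 1\<close> by (simp add: power_eq_if)
    then have "((\<lambda>t. - 1 / (real n * t ^ n)) has_real_derivative 1 / t ^ (n + 1)) (at t)"
      using t \<open>n \<ge> 1\<close> by (auto intro!: derivative_eq_intros simp: field_simps)
    then show "((\<lambda>t. - 1 / (real n * t ^ n)) has_vector_derivative 1 / t ^ (n + 1)) (at t within {1..a})"
      by (simp add: has_real_derivative_iff_has_vector_derivative has_vector_derivative_at_within)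
  qed (use assms in \<open>auto intro!: continuous_intros\<close>)
  then show ?thesis
    using \<open>n \<ge> 1\<close> by (simp add: field_simps)
qed

lemma integral_dilations_1_2:
  fixes g :: "'a::euclidean_space \<Rightarrow> real"
  assumes g: "integrable lborel g"
  shows integrable_dilations_1_2:
      "integrable (lborel \<Otimes>\<^sub>M lborel) (\<lambda>(t, x). indicator {1..2} t * (g (t *\<^sub>R x) / t))"
    and "(\<integral>t. (\<integral>x. indicator {1..2} t * (g (t *\<^sub>R x) / t) \<partial>lborel) \<partial>lborel)
      = (\<integral>x. g x \<partial>lborel) * ((1 - 1 / 2 ^ DIM('a)) / DIM('a))"
proof -
  define n where "n = DIM('a)"
  have n: "n \<ge> 1"
    by (simp add: n_def DIM_positive Suc_leI)
  have [measurable]: "g \<in> borel_measurable borel"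
    using g by auto
  have slice: "(\<integral>x. indicator {1..2} t * (h (t *\<^sub>R x) / t) \<partial>lborel)
      = (\<integral>x. h x \<partial>lborel) * (indicator {1..2} t / t ^ (n + 1))"
    if "integrable lborel h" for h :: "'a \<Rightarrow> real" and t
    using integral_lborel_scaleR(2)[OF _ that, of t]
    by (cases "t \<in> {1..2}") (simp_all add: n_def)
  have "continuous_on {1..2::real} (\<lambda>t. 1 / t ^ (n + 1))"
    by (auto intro!: continuous_intros)
  from borel_integrable_compact[OF compact_Icc this]
  have "integrable lborel (\<lambda>t::real. indicator {1..2} t / t ^ (n + 1))"
    by simp
  then have "integrable lborel (\<lambda>t. (\<integral>x. \<bar>g x\<bar> \<partial>lborel) * (indicator {1..2} t / t ^ (n + 1)))"
    by (rule integrable_mult_right)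
  moreover have "(\<integral>x. norm (indicator {1..2} t * (g (t *\<^sub>R x) / t)) \<partial>lborel)
      = (\<integral>x. \<bar>g x\<bar> \<partial>lborel) * (indicator {1..2} t / t ^ (n + 1))" for t
  proof -
    have "norm (indicator {1..2} t * (g (t *\<^sub>R x) / t)) = indicator {1..2} t * (\<bar>g (t *\<^sub>R x)\<bar> / t)" for x
      by (cases "t \<in> {1..2}") auto
    then show ?thesis
      using slice[of "\<lambda>x. \<bar>g x\<bar>" t] g by simp
  qed
  moreover have "integrable lborel (\<lambda>x. indicator {1..2} t * (g (t *\<^sub>R x) / t))" for t
    using integral_lborel_scaleR(1)[OF _ g, of t] by (cases "t \<in> {1..2}") simp_all
  ultimately show "integrable (lborel \<Otimes>\<^sub>M lborel) (\<lambda>(t, x). indicator {1..2} t * (g (t *\<^sub>R x) / t))"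
    by (intro lborel_pair.Fubini_integrable) auto
  have "(\<integral>t. (\<integral>x. indicator {1..2} t * (g (t *\<^sub>R x) / t) \<partial>lborel) \<partial>lborel)
      = (\<integral>t. (\<integral>x. g x \<partial>lborel) * (indicator {1..2} t / t ^ (n + 1)) \<partial>lborel)"
    by (simp only: slice[OF g])
  also have "\<dots> = (\<integral>x. g x \<partial>lborel) * ((1 - 1 / 2 ^ n) / n)"
    using integral_inverse_power_atLeastAtMost[of 2 n] n by (simp only: integral_mult_right_zero)
  finally show "(\<integral>t. (\<integral>x. indicator {1..2} t * (g (t *\<^sub>R x) / t) \<partial>lborel) \<partial>lborel)
      = (\<integral>x. g x \<partial>lborel) * ((1 - 1 / 2 ^ DIM('a)) / DIM('a))"
    by (simp only: n_def)
qed

lemma integral_indicator_FTC: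
  fixes F f :: "real \<Rightarrow> real"
  assumes "a \<le> b" and deriv: "\<And>t. t \<in> {a..b} \<Longrightarrow> (F has_real_derivative f t) (at t)"
    and f: "integrable lborel (\<lambda>t. indicator {a..b} t * f t)"
  shows "(\<integral>t. indicator {a..b} t * f t \<partial>lborel) = F b - F a"
proof -
  have "(f has_integral F b - F a) {a..b}"
    using \<open>a \<le> b\<close> deriv
    by (intro fundamental_theorem_of_calculus)
      (auto simp: has_real_derivative_iff_has_vector_derivative has_vector_derivative_at_within)
  moreover have "(\<lambda>t. indicator {a..b} t * f t) = (\<lambda>t. if t \<in> {a..b} then f t else 0)"
    by auto
  ultimately have "((\<lambda>t. indicator {a..b} t * f t) has_integral F b - F a) UNIV"
    by (simp only: has_integral_restrict_UNIV)
  then show ?thesis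
    using has_integral_integral_lborel[OF f] has_integral_unique by blast
qed

text \<open>Integrate \<open>f(2x) - f(x) = \<integral>\<^sub>1\<^sup>2 g(tx)/t dt\<close> over \<open>x\<close> and exchange the integrals: dilation
  turns the left side into \<open>(2\<^sup>-\<^sup>n - 1)\<integral> f\<close> and the right side into \<open>(1 - 2\<^sup>-\<^sup>n)/n \<integral> g\<close>.
  No regularity of \<open>f\<close> at the origin is needed.\<close>

lemma integral_Euler_operator:
  fixes f g :: "'a::euclidean_space \<Rightarrow> real"
  assumes f: "integrable lborel f" and g: "integrable lborel g"
    and ray_deriv: "\<And>x t. x \<noteq> 0 \<Longrightarrow> t \<in> {1..2} \<Longrightarrow>
      ((\<lambda>\<tau>. f (\<tau> *\<^sub>R x)) has_real_derivative g (t *\<^sub>R x) / t) (at t)"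
  shows "(\<integral>x. g x \<partial>lborel) = - real DIM('a) * (\<integral>x. f x \<partial>lborel)"
proof -
  define n where "n = DIM('a)"
  have n: "n \<ge> 1"
    by (simp add: n_def DIM_positive Suc_leI)
  have [measurable]: "f \<in> borel_measurable borel"
    using f by auto
  define F where "F t x = indicator {1..2} t * (g (t *\<^sub>R x) / t)" for t x
  have F: "integrable (lborel \<Otimes>\<^sub>M lborel) (\<lambda>(t, x). F t x)"
    unfolding F_def by (rule integrable_dilations_1_2[OF g])
  have ray_integral: "(\<integral>t. F t x \<partial>lborel) = f (2 *\<^sub>R x) - f (1 *\<^sub>R x)"
    if "x \<noteq> 0" and "integrable lborel (\<lambda>t. F t x)" for x
    unfolding F_def using that ray_deriv[OF that(1)]
    by (intro integral_indicator_FTC) (simp_all add: F_def)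
  have "(\<lambda>x. \<integral>t. F t x \<partial>lborel) \<in> borel_measurable lborel"
    using lborel_pair.integrable_snd[OF F] by auto
  then have ray_integrals: "(\<integral>x. (\<integral>t. F t x \<partial>lborel) \<partial>lborel) = (\<integral>x. f (2 *\<^sub>R x) - f (1 *\<^sub>R x) \<partial>lborel)"
    using lborel_pair.AE_integrable_snd[OF F] AE_lborel_singleton[of 0]
    by (intro integral_cong_AE) (auto elim!: AE_mp simp: ray_integral)
  have "(\<integral>x. g x \<partial>lborel) * ((1 - 1 / 2 ^ n) / n) = (\<integral>t. (\<integral>x. F t x \<partial>lborel) \<partial>lborel)"
    using integral_dilations_1_2(2)[OF g] by (simp only: F_def n_def)
  also have "\<dots> = (\<integral>x. (\<integral>t. F t x \<partial>lborel) \<partial>lborel)"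
    using lborel_pair.Fubini_integral[OF F] by simp
  also have "\<dots> = (\<integral>x. f x \<partial>lborel) / 2 ^ n - (\<integral>x. f x \<partial>lborel)"
    unfolding ray_integrals using integral_lborel_scaleR[of 2 f] f by (simp add: n_def)
  finally have "(\<integral>x. g x \<partial>lborel) / n * (1 - 1 / 2 ^ n) = - (\<integral>x. f x \<partial>lborel) * (1 - 1 / 2 ^ n)"
    using n by (simp add: field_simps)
  moreover have "1 - 1 / 2 ^ n \<noteq> (0::real)"
    using one_less_power[of "2::real" n] n by fastforce
  ultimately have "(\<integral>x. g x \<partial>lborel) / n = - (\<integral>x. f x \<partial>lborel)"
    using mult_right_cancel by blast
  then show ?thesis
    using n by (simp add: n_def field_simps)
qed

lemma has_real_derivative_along_ray:
  fixes \<phi> :: "'a::real_inner \<Rightarrow> real"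
  assumes "(\<phi> has_derivative (\<lambda>h. \<phi>' \<bullet> h)) (at (t *\<^sub>R x))"
  shows "((\<lambda>\<tau>. \<phi> (\<tau> *\<^sub>R x)) has_real_derivative \<phi>' \<bullet> x) (at t)"
proof -
  have "((\<lambda>\<tau>::real. \<tau> *\<^sub>R x) has_derivative (\<lambda>h. h *\<^sub>R x)) (at t)"
    by (auto intro!: derivative_eq_intros)
  from diff_chain_at[OF this assms] show ?thesis
    unfolding has_field_derivative_def o_def
    by (rule has_derivative_eq_rhs) (simp add: fun_eq_iff)
qed

lemma absorb_energy_identity:
  fixes a b c P Q n s :: real
  assumes identity: "(s - 1) * a\<^sup>2 = 2 * P + (n - 1) * Q"
    and P: "\<bar>P\<bar> \<le> a * b" and Q: "\<bar>Q\<bar> \<le> a * c"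
    and "a \<ge> 0" "b \<ge> 0" "c \<ge> 0" "n \<ge> 1" "s \<noteq> 1"
  shows "a \<le> (n + 1) / \<bar>s - 1\<bar> * (b + c)"
proof (cases "a = 0")
  case False
  have "\<bar>s - 1\<bar> * a * a = \<bar>(s - 1) * a\<^sup>2\<bar>"
    using \<open>a \<ge> 0\<close> by (simp add: abs_mult power2_eq_square)
  also have "\<dots> = \<bar>2 * P + (n - 1) * Q\<bar>"
    by (simp only: identity)
  also have "\<dots> \<le> 2 * (a * b) + (n - 1) * (a * c)"
    using P Q \<open>n \<ge> 1\<close> by (simp add: abs_mult abs_triangle_ineq[THEN order_trans] add_mono mult_left_mono)
  also have "\<dots> \<le> (n + 1) * (b + c) * a"
  proof -
    have "2 * b + (n - 1) * c \<le> (n + 1) * (b + c)"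
      using mult_nonneg_nonneg[of "n - 1" b] assms(5-7) by (simp add: algebra_simps)
    from mult_left_mono[OF this \<open>a \<ge> 0\<close>] show ?thesis
      by (simp add: algebra_simps)
  qed
  finally have "\<bar>s - 1\<bar> * a \<le> (n + 1) * (b + c)"
    using False \<open>a \<ge> 0\<close> by (simp add: mult_le_cancel_right)
  then show ?thesis
    using \<open>s \<noteq> 1\<close> by (simp add: field_simps)
qed (use assms in simp)

lemma wt_mult: "wt k a x * wt k b x = wt k (a + b) x"
  by (simp add: wt_def powr_add)

lemma borel_measurable_wt [measurable]: "wt k a \<in> borel_measurable borel"
  unfolding wt_def by measurable

lemma borel_measurable_radial_deriv [measurable]:
  "g \<in> borel_measurable borel \<Longrightarrow> radial_deriv g \<in> borel_measurable borel"
  unfolding radial_deriv_def by measurable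

lemma integrable_square_wt_mult:
  fixes \<phi> :: "real^'n \<Rightarrow> real"
  assumes cont: "continuous_on UNIV \<phi>" and supp: "\<And>x. norm x > k \<Longrightarrow> \<phi> x = 0"
  shows "integrable lborel (\<lambda>x. (wt k a x * \<phi> x)\<^sup>2)"
proof -
  have "continuous_on (cball 0 k) (\<lambda>x. (wt k a x * \<phi> x)\<^sup>2)"
    unfolding wt_def
    by (auto intro!: continuous_intros continuous_on_subset[OF cont])
  then have "integrable lborel (\<lambda>x. indicator (cball 0 k) x *\<^sub>R (wt k a x * \<phi> x)\<^sup>2)"
    by (rule borel_integrable_compact[OF compact_cball])
  moreover have "(\<lambda>x. indicator (cball 0 k) x *\<^sub>R (wt k a x * \<phi> x)\<^sup>2) = (\<lambda>x. (wt k a x * \<phi> x)\<^sup>2)"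
    by (auto simp: fun_eq_iff indicator_def supp)
  ultimately show ?thesis
    by (simp only:)
qed

context
  fixes k :: real and \<phi> :: "real^'n \<Rightarrow> real" and \<phi>' :: "real^'n \<Rightarrow> real^'n"
  assumes der: "\<And>x. (\<phi> has_derivative (\<lambda>h. \<phi>' x \<bullet> h)) (at x)"
    and cont': "continuous_on UNIV \<phi>'"
    and supp: "\<And>x. norm x > k \<Longrightarrow> \<phi> x = 0"
begin

lemma continuous_phi: "continuous_on UNIV \<phi>"
  by (intro continuous_at_imp_continuous_on ballI has_derivative_continuous[OF der])

lemma borel_measurable_phi [measurable]: "\<phi> \<in> borel_measurable borel" "\<phi>' \<in> borel_measurable borel"
  using continuous_phi cont' by (auto intro: borel_measurable_continuous_onI)

lemma ray_derivative_weighted_energy: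
  assumes x: "x \<noteq> 0" and t: "t > 0"
  shows "((\<lambda>\<tau>. wt k (s - 1) (\<tau> *\<^sub>R x) * (\<phi> (\<tau> *\<^sub>R x))\<^sup>2 / norm (\<tau> *\<^sub>R x)) has_real_derivative
      (wt k (s - 1) (t *\<^sub>R x) * (2 * \<phi> (t *\<^sub>R x) * radial_deriv \<phi>' (t *\<^sub>R x) - (\<phi> (t *\<^sub>R x))\<^sup>2 / norm (t *\<^sub>R x))
        - (s - 1) * wt k (s - 2) (t *\<^sub>R x) * (\<phi> (t *\<^sub>R x))\<^sup>2) / t) (at t)"
proof (cases "t * norm x < 1 + k")
  case True
  define r where "r = norm x"
  have r: "r > 0"
    using x by (simp add: r_def)
  define S where "S = {\<tau>. 0 < \<tau> \<and> \<tau> * r < 1 + k}"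
  have "open S"
    unfolding S_def by (intro open_Collect_conj open_Collect_less continuous_intros)
  have "t \<in> S"
    using t True by (simp add: S_def r_def)
  have on_S: "(1 + k - \<tau> * r) powr (s - 1) * (\<phi> (\<tau> *\<^sub>R x))\<^sup>2 / (\<tau> * r)
      = wt k (s - 1) (\<tau> *\<^sub>R x) * (\<phi> (\<tau> *\<^sub>R x))\<^sup>2 / norm (\<tau> *\<^sub>R x)" if "\<tau> \<in> S" for \<tau>
    using that by (simp add: S_def wt_def r_def)
  have wt_ray: "wt k a (t *\<^sub>R x) = (1 + k - t * r) powr a" for a
    using t by (simp add: wt_def r_def)
  have radial_deriv_ray: "radial_deriv \<phi>' (t *\<^sub>R x) = (\<phi>' (t *\<^sub>R x) \<bullet> x) / r"
    using t r by (simp add: radial_deriv_def r_def inner_commute field_simps)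
  have dP: "((\<lambda>\<tau>. \<phi> (\<tau> *\<^sub>R x)) has_real_derivative \<phi>' (t *\<^sub>R x) \<bullet> x) (at t)"
    by (rule has_real_derivative_along_ray[OF der])
  have "((\<lambda>\<tau>. (1 + k - \<tau> * r) powr (s - 1) * (\<phi> (\<tau> *\<^sub>R x))\<^sup>2 / (\<tau> * r)) has_real_derivative
      (wt k (s - 1) (t *\<^sub>R x) * (2 * \<phi> (t *\<^sub>R x) * radial_deriv \<phi>' (t *\<^sub>R x) - (\<phi> (t *\<^sub>R x))\<^sup>2 / norm (t *\<^sub>R x))
        - (s - 1) * wt k (s - 2) (t *\<^sub>R x) * (\<phi> (t *\<^sub>R x))\<^sup>2) / t) (at t)"
    using True t r
    by (auto intro!: derivative_eq_intros DERIV_fun_powr dP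
        simp: wt_ray radial_deriv_ray r_def[symmetric] field_simps power2_eq_square)
  then show ?thesis
    by (rule has_field_derivative_transform_within_open[OF _ \<open>open S\<close> \<open>t \<in> S\<close>]) (rule on_S)
next
  case False
  have "open {\<tau>. \<tau> * norm x > k}"
    by (intro open_Collect_less continuous_intros)
  moreover have "t \<in> {\<tau>. \<tau> * norm x > k}"
    using False by simp
  moreover have "norm (\<tau> *\<^sub>R x) > k" if "\<tau> * norm x > k" for \<tau>
  proof -
    have "\<tau> * norm x \<le> \<bar>\<tau>\<bar> * norm x"
      by (intro mult_right_mono) auto
    then show ?thesis
      using that by simp
  qed
  ultimately show ?thesis
    using has_field_derivative_transform_within_open[OF DERIV_const, of "{\<tau>. \<tau> * norm x > k}" t 0]
    by (simp add: supp)
qed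

lemma weighted_energy_identity:
  assumes deriv_sq: "integrable lborel (\<lambda>x. (wt k (s/2) x * radial_deriv \<phi>' x)\<^sup>2)"
    and ratio_sq: "integrable lborel (\<lambda>x. (wt k (s/2) x * (\<phi> x / norm x))\<^sup>2)"
  shows "(s - 1) * (\<integral>x. (wt k ((s-2)/2) x * \<phi> x)\<^sup>2 \<partial>lborel)
    = 2 * (\<integral>x. (wt k ((s-2)/2) x * \<phi> x) * (wt k (s/2) x * radial_deriv \<phi>' x) \<partial>lborel)
      + (real CARD('n) - 1) * (\<integral>x. (wt k ((s-2)/2) x * \<phi> x) * (wt k (s/2) x * (\<phi> x / norm x)) \<partial>lborel)"
proof -
  define u where "u x = wt k ((s-2)/2) x * \<phi> x" for x
  define v where "v x = wt k (s/2) x * radial_deriv \<phi>' x" for x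
  define w where "w x = wt k (s/2) x * (\<phi> x / norm x)" for x
  have [measurable]: "u \<in> borel_measurable borel" "v \<in> borel_measurable borel" "w \<in> borel_measurable borel"
    unfolding u_def[abs_def] v_def[abs_def] w_def[abs_def] by measurable
  have A: "integrable lborel (\<lambda>x. (u x)\<^sup>2)"
    unfolding u_def by (rule integrable_square_wt_mult[OF continuous_phi supp])
  have B: "integrable lborel (\<lambda>x. (v x)\<^sup>2)" and C: "integrable lborel (\<lambda>x. (w x)\<^sup>2)"
    using deriv_sq ratio_sq by (simp_all add: v_def w_def)
  have uv: "integrable lborel (\<lambda>x. u x * v x)"
    by (rule integrable_mult_of_square_integrable[OF A B]) measurable
  have uw: "integrable lborel (\<lambda>x. u x * w x)"
    by (rule integrable_mult_of_square_integrable[OF A C]) measurable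
  have exponents: "(s-2)/2 + s/2 = s - 1" "(s-2)/2 + (s-2)/2 = s - 2"
    by (simp_all add: field_simps)
  have energy: "u x * w x = wt k (s - 1) x * (\<phi> x)\<^sup>2 / norm x" for x
    using wt_mult[of k "(s-2)/2" x "s/2", unfolded exponents]
    by (simp add: u_def w_def power2_eq_square)
  have Euler: "- (s - 1) * (u x)\<^sup>2 + 2 * (u x * v x) - u x * w x
      = wt k (s - 1) x * (2 * \<phi> x * radial_deriv \<phi>' x - (\<phi> x)\<^sup>2 / norm x)
        - (s - 1) * wt k (s - 2) x * (\<phi> x)\<^sup>2" for x
    using wt_mult[of k "(s-2)/2" x "s/2", unfolded exponents]
      wt_mult[of k "(s-2)/2" x "(s-2)/2", unfolded exponents]
    by (simp add: u_def v_def w_def power2_eq_square algebra_simps)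
  have "- (s - 1) * (\<integral>x. (u x)\<^sup>2 \<partial>lborel) + 2 * (\<integral>x. u x * v x \<partial>lborel) - (\<integral>x. u x * w x \<partial>lborel)
      = (\<integral>x. - (s - 1) * (u x)\<^sup>2 + 2 * (u x * v x) - u x * w x \<partial>lborel)"
    using A uv uw by simp
  also have "\<dots> = - real DIM(real^'n) * (\<integral>x. u x * w x \<partial>lborel)"
  proof (rule integral_Euler_operator[of "\<lambda>x. u x * w x" "\<lambda>x. - (s - 1) * (u x)\<^sup>2 + 2 * (u x * v x) - u x * w x"])
    show "integrable lborel (\<lambda>x. - (s - 1) * (u x)\<^sup>2 + 2 * (u x * v x) - u x * w x)"
      using A uv uw by simp
    fix x :: "real^'n" and t :: real
    assume "x \<noteq> 0" "t \<in> {1..2}"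
    then show "((\<lambda>\<tau>. u (\<tau> *\<^sub>R x) * w (\<tau> *\<^sub>R x)) has_real_derivative
        (- (s - 1) * (u (t *\<^sub>R x))\<^sup>2 + 2 * (u (t *\<^sub>R x) * v (t *\<^sub>R x)) - u (t *\<^sub>R x) * w (t *\<^sub>R x)) / t) (at t)"
      unfolding Euler unfolding energy by (intro ray_derivative_weighted_energy) auto
  qed (rule uw)
  finally have "(s - 1) * (\<integral>x. (u x)\<^sup>2 \<partial>lborel)
      = 2 * (\<integral>x. u x * v x \<partial>lborel) + (real CARD('n) - 1) * (\<integral>x. u x * w x \<partial>lborel)"
    by (simp add: algebra_simps)
  then show ?thesis
    by (simp only: u_def v_def w_def)
qed

lemma weighted_Hardy_inequality:
  assumes deriv_sq: "integrable lborel (\<lambda>x. (wt k (s/2) x * radial_deriv \<phi>' x)\<^sup>2)"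
    and ratio_sq: "integrable lborel (\<lambda>x. (wt k (s/2) x * (\<phi> x / norm x))\<^sup>2)"
    and "s \<noteq> 1"
  shows "L2norm (\<lambda>x. wt k ((s-2)/2) x * \<phi> x)
    \<le> (real CARD('n) + 1) / \<bar>s - 1\<bar> * (L2norm (\<lambda>x. wt k (s/2) x * radial_deriv \<phi>' x)
        + L2norm (\<lambda>x. wt k (s/2) x * (\<phi> x / norm x)))"
proof -
  have A: "integrable lborel (\<lambda>x. (wt k ((s-2)/2) x * \<phi> x)\<^sup>2)"
    by (rule integrable_square_wt_mult[OF continuous_phi supp])
  show ?thesis
    unfolding L2norm_def
    by (rule absorb_energy_identity[OF _ Cauchy_Schwarz_integral[OF A deriv_sq]
          Cauchy_Schwarz_integral[OF A ratio_sq]])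
      (use weighted_energy_identity[OF deriv_sq ratio_sq] \<open>s \<noteq> 1\<close> in simp_all)
qed

end

theorem lemma2p1:
  fixes s :: real
  assumes "CARD('n::finite) \<ge> 2" and "s \<noteq> 1"
  shows "\<exists>C. \<forall>k>0. \<forall>(\<phi>::real^'n \<Rightarrow> real) (\<phi>'::real^'n \<Rightarrow> real^'n).
           (\<forall>x. (\<phi> has_derivative (\<lambda>h. \<phi>' x \<bullet> h)) (at x)) \<and> continuous_on UNIV \<phi>'
           \<and> closure {x. \<phi> x \<noteq> 0} \<subseteq> cball 0 k
           \<and> integrable lborel (\<lambda>x. (wt k (s/2) x * radial_deriv \<phi>' x)\<^sup>2)
           \<and> integrable lborel (\<lambda>x. (wt k (s/2) x * (\<phi> x / norm x))\<^sup>2)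
           \<longrightarrow> integrable lborel (\<lambda>x. (wt k ((s-2)/2) x * \<phi> x)\<^sup>2)
             \<and> L2norm (\<lambda>x. wt k ((s-2)/2) x * \<phi> x)
                 \<le> C * (L2norm (\<lambda>x. wt k (s/2) x * radial_deriv \<phi>' x)
                        + L2norm (\<lambda>x. wt k (s/2) x * (\<phi> x / norm x)))"
proof (intro exI allI impI conjI; elim conjE)
  fix k :: real and \<phi> :: "real^'n \<Rightarrow> real" and \<phi>' :: "real^'n \<Rightarrow> real^'n"
  assume "k > 0" and der: "\<forall>x. (\<phi> has_derivative (\<lambda>h. \<phi>' x \<bullet> h)) (at x)"
    and cont': "continuous_on UNIV \<phi>'" and closure_supp: "closure {x. \<phi> x \<noteq> 0} \<subseteq> cball 0 k"
    and deriv_sq: "integrable lborel (\<lambda>x. (wt k (s/2) x * radial_deriv \<phi>' x)\<^sup>2)"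
    and ratio_sq: "integrable lborel (\<lambda>x. (wt k (s/2) x * (\<phi> x / norm x))\<^sup>2)"
  have supp: "\<phi> x = 0" if "norm x > k" for x
  proof (rule ccontr)
    assume "\<phi> x \<noteq> 0"
    then have "x \<in> closure {x. \<phi> x \<noteq> 0}"
      by (intro closure_subset[THEN subsetD] CollectI)
    then have "x \<in> cball 0 k"
      by (rule subsetD[OF closure_supp])
    with that show False
      by simp
  qed
  note Hardy_context = der[rule_format] cont' supp
  show "integrable lborel (\<lambda>x. (wt k ((s-2)/2) x * \<phi> x)\<^sup>2)"
    by (rule integrable_square_wt_mult[OF continuous_phi[OF Hardy_context] supp])
  show "L2norm (\<lambda>x. wt k ((s-2)/2) x * \<phi> x)
      \<le> (real CARD('n) + 1) / \<bar>s - 1\<bar> * (L2norm (\<lambda>x. wt k (s/2) x * radial_deriv \<phi>' x)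
        + L2norm (\<lambda>x. wt k (s/2) x * (\<phi> x / norm x)))"
    by (rule weighted_Hardy_inequality[OF Hardy_context deriv_sq ratio_sq assms(2)])
qed

end
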